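(* Assume in addition $1\le M\le N/2$. For every $y$ such that either ($Py\equiv0\pmod N$ and $y\ne0$) or ($Py\not\equiv0\pmod N$ and $MPy\not\equiv0\pmod N$), one has $$\frac{N}{4M}\cdot\frac{N}{N-M}\;\ge\;\frac{\Pr_{\mathrm{Amp}}(y)}{\Pr_{\mathrm{QFT}}(y)}\;\ge\;\frac{N}{4M}\cdot\frac{N}{N-M}\Big(1-\frac{2M}{N}\Big)^2,\qquad \frac{N}{2M}\cdot\frac{N}{N-M}\;\ge\;\frac{\Pr_{\mathrm{Amp}}(y)}{\Pr_{\mathrm{QHS}}(y)}\;\ge\;\frac{N}{2M}\cdot\frac{N}{N-M}\Big(1-\frac{2M}{N}\Big)^2,$$ and in fact $\Pr_{\mathrm{Amp}}(y)/\Pr_{\mathrm{QFT}}(y)=\frac{N^2}{4M^2}\tan^2\theta\sin^2(2k\theta)$ and $\Pr_{\mathrm{Amp}}(y)/\Pr_{\mathrm{QHS}}(y)=\frac{N^2}{2M^2}\tan^2\theta\sin^2(2k\theta)$. Consequently, for any nonempty set $S$ of such $y$, the same two chains of inequalities hold with $\Pr(y)$ replaced by $\Pr(S)=\sum_{y\in S}\Pr(y)$ for each algorithm.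
   Context: Setting: $N\ge 2$, $\mathcal L=\{0,\dots,N-1\}$, integers $s\ge0,P\ge1,M\ge1$ with $M<N$ and $s+(M-1)P\le N-1$; $A=\{s+rP:r=0,\dots,M-1\}$; $\omega=e^{-2\pi i/N}$; $f=\mathbf 1_A$. Let $\sin\theta=\sqrt{M/N}$, $\theta\in(0,\pi/2)$, $k=\lfloor\pi/(4\theta)\rfloor$, $a_k=\frac{\sin((2k+1)\theta)}{\sqrt M}$, $b_k=\frac{\cos((2k+1)\theta)}{\sqrt{N-M}}$. Define $\Pr_{\mathrm{Amp}}(y)=\big|\frac1{\sqrt N}\sum_z\psi_k(z)\omega^{zy}\big|^2$ where $\psi_k=a_k$ on $A$ and $b_k$ off $A$; $\Pr_{\mathrm{QFT}}(y)=\big|\frac1N\sum_z(-1)^{f(z)}\omega^{zy}\big|^2$; $\Pr_{\mathrm{QHS}}(y)=\frac1{N^2}\big|\sum_{x\in A}\omega^{xy}\big|^2+\frac1{N^2}\big|\sum_{x\notin A}\omega^{xy}\big|^2$. *)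

theory Defs
  imports Complex_Main
begin

definition omega :: "nat \<Rightarrow> complex" where
  "omega N = cis (- 2 * pi / real N)"

definition setA :: "nat \<Rightarrow> nat \<Rightarrow> nat \<Rightarrow> nat set" where
  "setA s P M = {s + r * P | r. r < M}"

definition gtheta :: "nat \<Rightarrow> nat \<Rightarrow> real" where
  "gtheta N M = arcsin (sqrt (real M / real N))"

definition gk :: "nat \<Rightarrow> nat \<Rightarrow> nat" where
  "gk N M = nat \<lfloor>pi / (4 * gtheta N M)\<rfloor>"

definition ak :: "nat \<Rightarrow> nat \<Rightarrow> real" where
  "ak N M = sin ((2 * real (gk N M) + 1) * gtheta N M) / sqrt (real M)"

definition bk :: "nat \<Rightarrow> nat \<Rightarrow> real" where
  "bk N M = cos ((2 * real (gk N M) + 1) * gtheta N M) / sqrt (real N - real M)"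

definition psik :: "nat \<Rightarrow> nat \<Rightarrow> nat \<Rightarrow> nat \<Rightarrow> nat \<Rightarrow> real" where
  "psik N s P M z = (if z \<in> setA s P M then ak N M else bk N M)"

definition PrAmp :: "nat \<Rightarrow> nat \<Rightarrow> nat \<Rightarrow> nat \<Rightarrow> nat \<Rightarrow> real" where
  "PrAmp N s P M y =
     (cmod (complex_of_real (1 / sqrt (real N)) *
        (\<Sum>z<N. complex_of_real (psik N s P M z) * omega N ^ (z * y))))\<^sup>2"

definition PrQFT :: "nat \<Rightarrow> nat \<Rightarrow> nat \<Rightarrow> nat \<Rightarrow> nat \<Rightarrow> real" where
  "PrQFT N s P M y =
     (cmod (complex_of_real (1 / real N) *
        (\<Sum>z<N. (if z \<in> setA s P M then -1 else 1) * omega N ^ (z * y))))\<^sup>2"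

definition PrQHS :: "nat \<Rightarrow> nat \<Rightarrow> nat \<Rightarrow> nat \<Rightarrow> nat \<Rightarrow> real" where
  "PrQHS N s P M y =
     1 / (real N)\<^sup>2 * (cmod (\<Sum>x\<in>setA s P M. omega N ^ (x * y)))\<^sup>2 +
     1 / (real N)\<^sup>2 * (cmod (\<Sum>x\<in>{..<N} - setA s P M. omega N ^ (x * y)))\<^sup>2"

definition goodY :: "nat \<Rightarrow> nat \<Rightarrow> nat \<Rightarrow> nat \<Rightarrow> bool" where
  "goodY N P M y \<longleftrightarrow>
     ((P * y) mod N = 0 \<and> y \<noteq> 0) \<or> ((P * y) mod N \<noteq> 0 \<and> (M * P * y) mod N \<noteq> 0)"

end

theory Submission
  imports Defs
begin

text \<open>For \<open>y \<noteq> 0\<close> the full character sum \<open>\<Sum>z<N. \<omega>^(zy)\<close> vanishes, so each of the three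
amplitudes is a multiple of \<open>G = \<Sum>x\<in>A. \<omega>^(xy)\<close>: up to normalisation it is \<open>(a\<^sub>k - b\<^sub>k) G\<close> for
amplitude amplification, \<open>-2G\<close> for the QFT, and \<open>G, -G\<close> for the two terms of the hidden subgroup
measurement. The hypothesis on \<open>y\<close> makes the geometric sum \<open>G\<close> nonzero, so all ratios are the
constant \<open>N (a\<^sub>k - b\<^sub>k)\<^sup>2 / 4\<close> (or twice it). Writing \<open>\<sqrt>M = \<sqrt>N sin \<theta>\<close> and
\<open>\<sqrt>(N - M) = \<sqrt>N cos \<theta>\<close> gives \<open>a\<^sub>k - b\<^sub>k = sin (2k\<theta>) / (\<sqrt>N sin \<theta> cos \<theta>)\<close>, and the choice of
\<open>k\<close> puts \<open>2k\<theta>\<close> in \<open>[\<pi>/2 - 2\<theta>, \<pi>/2]\<close>, whence \<open>1 - 2M/N = cos 2\<theta> \<le> sin (2k\<theta>) \<le> 1\<close>.\<close>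

definition ampRatio :: "nat \<Rightarrow> nat \<Rightarrow> real" where
  "ampRatio N M = real N * (ak N M - bk N M)\<^sup>2 / 4"

lemma omega_power: "omega N ^ n = cis (- 2 * pi * real n / real N)"
  unfolding omega_def DeMoivre by (simp add: field_simps)

lemma omega_power_eq_1_iff:
  assumes "N > 0"
  shows "omega N ^ n = 1 \<longleftrightarrow> n mod N = 0"
proof
  assume "n mod N = 0"
  then obtain q where q: "n = N * q" by auto
  have "omega N ^ N = 1"
    unfolding omega_power using assms by (simp add: cis_multiple_2pi[of "-1", simplified])
  then show "omega N ^ n = 1" unfolding q power_mult by simp
next
  assume "omega N ^ n = 1"
  then have "cos (- 2 * pi * real n / real N) = 1"
    unfolding omega_power by (simp add: complex_eq_iff)
  then obtain j :: int where "- 2 * pi * real n / real N = real_of_int j * 2 * pi"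
    using cos_one_2pi_int by blast
  then have "pi * real n = pi * (- real_of_int j * real N)" using assms by (simp add: field_simps)
  then have "real n = - real_of_int j * real N" using mult_left_cancel[OF pi_neq_zero] by blast
  then have "int n = - j * int N" by (metis of_int_eq_iff of_int_minus of_int_mult of_int_of_nat_eq)
  then have "int N dvd int n" by simp
  then show "n mod N = 0" by simp
qed

lemma sum_omega_power_eq_0:
  assumes "N > 0" and "y mod N \<noteq> 0"
  shows "(\<Sum>z<N. omega N ^ (z * y)) = 0"
proof -
  have ne: "omega N ^ y \<noteq> 1" using assms omega_power_eq_1_iff[of N y] by simp
  have "(omega N ^ y) ^ N = 1"
    unfolding power_mult[symmetric] using omega_power_eq_1_iff[of N "y * N"] assms(1) by simp
  then have "(\<Sum>z<N. (omega N ^ y) ^ z) = 0" unfolding geometric_sum[OF ne] by simp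
  then show ?thesis by (simp add: power_mult[symmetric] mult.commute[of _ y])
qed

lemma sum_two_valued_weights:
  fixes w :: "nat \<Rightarrow> 'a::comm_ring"
  assumes "A \<subseteq> {..<N}" and "(\<Sum>z<N. w z) = 0"
  shows "(\<Sum>z<N. (if z \<in> A then a else b) * w z) = (a - b) * (\<Sum>z\<in>A. w z)"
proof -
  have "(\<Sum>z<N. (if z \<in> A then a else b) * w z)
      = b * (\<Sum>z<N. w z) + (\<Sum>z<N. if z \<in> A then (a - b) * w z else 0)"
    by (simp add: sum_distrib_left flip: sum.distrib) (auto intro!: sum.cong simp: algebra_simps)
  also have "(\<Sum>z<N. if z \<in> A then (a - b) * w z else 0) = (\<Sum>z\<in>A. (a - b) * w z)"
    using sum.inter_restrict[of "{..<N}" "\<lambda>z. (a - b) * w z" A] assms(1)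
    by (simp add: Int_absorb1)
  finally show ?thesis using assms(2) by (simp add: sum_distrib_left)
qed

lemma setA_eq_image: "setA s P M = (\<lambda>r. s + r * P) ` {..<M}"
  unfolding setA_def by auto

lemma setA_subset_lessThan:
  assumes "M \<ge> 1" and "s + (M - 1) * P \<le> N - 1" and "N \<ge> 1"
  shows "setA s P M \<subseteq> {..<N}"
proof
  fix z assume "z \<in> setA s P M"
  then obtain r where "z = s + r * P" "r < M" unfolding setA_def by auto
  moreover have "r * P \<le> (M - 1) * P" using \<open>r < M\<close> by (intro mult_le_mono1) simp
  ultimately have "z \<le> s + (M - 1) * P" by simp
  then show "z \<in> {..<N}" using assms by simp
qed

lemma sum_setA_omega_power:
  assumes "P \<ge> 1"
  shows "(\<Sum>x\<in>setA s P M. omega N ^ (x * y)) = omega N ^ (s * y) * (\<Sum>r<M. (omega N ^ (P * y)) ^ r)"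
proof -
  have "inj_on (\<lambda>r. s + r * P) {..<M}" using assms by (auto simp: inj_on_def)
  then show ?thesis
    unfolding setA_eq_image
    by (simp add: sum.reindex sum_distrib_left algebra_simps power_add power_mult[symmetric])
qed

lemma sum_setA_omega_power_nonzero:
  assumes "P \<ge> 1" and "M \<ge> 1" and "N \<ge> 1" and "goodY N P M y"
  shows "(\<Sum>x\<in>setA s P M. omega N ^ (x * y)) \<noteq> 0"
proof -
  have "(\<Sum>r<M. (omega N ^ (P * y)) ^ r) \<noteq> 0"
  proof (cases "(P * y) mod N = 0")
    case True
    then have "omega N ^ (P * y) = 1" using omega_power_eq_1_iff assms(3) by simp
    then show ?thesis using assms(2) by simp
  next
    case False
    then have ne: "omega N ^ (P * y) \<noteq> 1" using omega_power_eq_1_iff assms(3) by simp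
    have "(M * P * y) mod N \<noteq> 0" using False assms(4) unfolding goodY_def by auto
    then have "(omega N ^ (P * y)) ^ M \<noteq> 1"
      using omega_power_eq_1_iff[of N "M * P * y"] assms(3)
      by (simp add: power_mult[symmetric] mult.commute mult.left_commute)
    then show ?thesis unfolding geometric_sum[OF ne] using ne by simp
  qed
  moreover have "omega N \<noteq> 0" unfolding omega_def by simp
  ultimately show ?thesis unfolding sum_setA_omega_power[OF assms(1)] by simp
qed

lemma sqrt_ratio_bounds:
  assumes "M \<le> N"
  shows "0 \<le> sqrt (real M / real N)" and "sqrt (real M / real N) \<le> 1"
  using assms by (auto simp: divide_le_eq_1)

lemma sin_gtheta:
  assumes "M \<le> N"
  shows "sin (gtheta N M) = sqrt (real M / real N)"
  unfolding gtheta_def using sqrt_ratio_bounds[OF assms] by (intro sin_arcsin; linarith)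

lemma cos_gtheta:
  assumes "M \<le> N" and "N > 0"
  shows "cos (gtheta N M) = sqrt ((real N - real M) / real N)"
proof -
  have "cos (gtheta N M) = sqrt (1 - (sqrt (real M / real N))\<^sup>2)"
    unfolding gtheta_def using sqrt_ratio_bounds[OF assms(1)] by (intro cos_arcsin; linarith)
  also have "(sqrt (real M / real N))\<^sup>2 = real M / real N" by simp
  also have "1 - real M / real N = (real N - real M) / real N" using assms by (simp add: field_simps)
  finally show ?thesis .
qed

lemma gtheta_pos:
  assumes "M > 0" and "M \<le> N"
  shows "gtheta N M > 0"
proof -
  have "arcsin 0 < arcsin (sqrt (real M / real N))"
    using assms sqrt_ratio_bounds[OF assms(2)] by (intro arcsin_less_arcsin) simp_all
  then show ?thesis unfolding gtheta_def by simp
qed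

lemma gtheta_le_quarter_pi:
  assumes "2 * M \<le> N"
  shows "gtheta N M \<le> pi / 4"
proof -
  have "real M / real N \<le> 1 / 2" using assms by (simp add: divide_le_eq)
  then have "sqrt (real M / real N) \<le> sqrt (1 / 2)" by (rule real_sqrt_le_mono)
  also have "sqrt (1 / 2) = sqrt 2 / 2" by (simp add: real_sqrt_divide field_simps)
  finally have "gtheta N M \<le> arcsin (sqrt 2 / 2)"
    unfolding gtheta_def using sqrt2_less_2 sqrt_ratio_bounds[of M N] assms
    by (intro arcsin_le_arcsin; linarith)
  also have "arcsin (sqrt 2 / 2) = pi / 4" using arcsin_sin[of "pi / 4"] by (simp add: sin_45)
  finally show ?thesis .
qed

lemma sin_gtheta_sq_cos_gtheta_sq:
  assumes "M \<le> N" and "N > 0"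
  shows "(sin (gtheta N M))\<^sup>2 * (cos (gtheta N M))\<^sup>2 = real M * (real N - real M) / (real N)\<^sup>2"
  using assms by (simp add: sin_gtheta cos_gtheta power2_eq_square)

lemma grover_angle_bounds:
  fixes t :: real
  assumes "0 < t" and "t \<le> pi / 4"
  shows "pi / 2 - 2 * t \<le> 2 * real (nat \<lfloor>pi / (4 * t)\<rfloor>) * t"
    and "2 * real (nat \<lfloor>pi / (4 * t)\<rfloor>) * t \<le> pi / 2"
proof -
  define k where "k = nat \<lfloor>pi / (4 * t)\<rfloor>"
  have "pi / (4 * t) \<ge> 1" using assms by (simp add: field_simps)
  then have "real k = \<lfloor>pi / (4 * t)\<rfloor>" unfolding k_def by simp
  then have "real k \<le> pi / (4 * t)" and "pi / (4 * t) < real k + 1" by linarith+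
  then have "real k * (4 * t) \<le> pi" and "pi < (real k + 1) * (4 * t)"
    using assms(1) by (simp_all add: field_simps)
  then show "pi / 2 - 2 * t \<le> 2 * real (nat \<lfloor>pi / (4 * t)\<rfloor>) * t"
    and "2 * real (nat \<lfloor>pi / (4 * t)\<rfloor>) * t \<le> pi / 2"
    unfolding k_def[symmetric] by (simp_all add: algebra_simps)
qed

lemma ak_minus_bk:
  assumes "0 < M" and "M < N"
  defines "\<theta> \<equiv> gtheta N M" and "k \<equiv> gk N M"
  shows "ak N M - bk N M = sin (2 * real k * \<theta>) / (sqrt (real N) * sin \<theta> * cos \<theta>)"
proof -
  have N: "real N > 0" using assms by simp
  have sqrt_M: "sqrt (real M) = sqrt (real N) * sin \<theta>"
    unfolding \<theta>_def using assms by (simp add: sin_gtheta real_sqrt_divide)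
  have sqrt_NM: "sqrt (real N - real M) = sqrt (real N) * cos \<theta>"
    unfolding \<theta>_def using assms by (simp add: cos_gtheta real_sqrt_divide)
  have pos: "sin \<theta> > 0" "cos \<theta> > 0"
    unfolding \<theta>_def using assms by (simp_all add: sin_gtheta cos_gtheta)
  have "ak N M - bk N M
      = (sin ((2 * real k + 1) * \<theta>) * cos \<theta> - cos ((2 * real k + 1) * \<theta>) * sin \<theta>)
        / (sqrt (real N) * sin \<theta> * cos \<theta>)"
    unfolding ak_def bk_def sqrt_M sqrt_NM \<theta>_def[symmetric] k_def[symmetric]
    using N pos by (simp add: field_simps)
  also have "sin ((2 * real k + 1) * \<theta>) * cos \<theta> - cos ((2 * real k + 1) * \<theta>) * sin \<theta>
      = sin (2 * real k * \<theta>)"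
    using sin_diff[of "(2 * real k + 1) * \<theta>" \<theta>] by (simp add: algebra_simps)
  finally show ?thesis .
qed

lemma ampRatio_eq_sin:
  assumes "0 < M" and "M < N"
  defines "\<theta> \<equiv> gtheta N M"
  shows "ampRatio N M = (sin (2 * real (gk N M) * \<theta>))\<^sup>2 / (4 * (sin \<theta>)\<^sup>2 * (cos \<theta>)\<^sup>2)"
  unfolding ampRatio_def ak_minus_bk[OF assms(1,2)] \<theta>_def using assms
  by (simp add: power_divide power_mult_distrib)

lemma ampRatio_eq_tan:
  assumes "0 < M" and "M < N"
  shows "ampRatio N M = (real N)\<^sup>2 / (4 * (real M)\<^sup>2) * (tan (gtheta N M))\<^sup>2
                          * (sin (2 * real (gk N M) * gtheta N M))\<^sup>2"
proof -
  have sin_sq: "(sin (gtheta N M))\<^sup>2 = real M / real N" using assms by (simp add: sin_gtheta)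
  have "cos (gtheta N M) > 0" using assms by (simp add: cos_gtheta)
  then show ?thesis
    unfolding ampRatio_eq_sin[OF assms] tan_def power_divide sin_sq using assms
    by (simp add: field_simps power2_eq_square)
qed

lemma grover_bound_eq:
  assumes "0 < M" and "M < N"
  shows "real N / (4 * real M) * (real N / (real N - real M))
           = 1 / (4 * (sin (gtheta N M))\<^sup>2 * (cos (gtheta N M))\<^sup>2)"
proof -
  have "1 / (4 * (sin (gtheta N M))\<^sup>2 * (cos (gtheta N M))\<^sup>2)
      = 1 / (4 * (real M * (real N - real M) / (real N)\<^sup>2))"
    using assms by (simp only: mult.assoc sin_gtheta_sq_cos_gtheta_sq less_imp_le)
  also have "\<dots> = real N / (4 * real M) * (real N / (real N - real M))"
    using assms by (simp add: field_simps power2_eq_square)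
  finally show ?thesis by simp
qed

lemma ampRatio_le:
  assumes "0 < M" and "M < N"
  shows "ampRatio N M \<le> real N / (4 * real M) * (real N / (real N - real M))"
proof -
  have "ampRatio N M \<le> 1 / (4 * (sin (gtheta N M))\<^sup>2 * (cos (gtheta N M))\<^sup>2)"
    unfolding ampRatio_eq_sin[OF assms] by (intro divide_right_mono) (auto simp: abs_square_le_1)
  then show ?thesis unfolding grover_bound_eq[OF assms] .
qed

lemma ampRatio_ge:
  assumes "0 < M" and "2 * M \<le> N"
  shows "ampRatio N M \<ge> real N / (4 * real M) * (real N / (real N - real M)) * (1 - 2 * real M / real N)\<^sup>2"
proof -
  define \<theta> where "\<theta> = gtheta N M"
  have M_lt_N: "M < N" using assms by simp
  have \<theta>: "0 < \<theta>" "\<theta> \<le> pi / 4"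
    unfolding \<theta>_def using assms gtheta_pos[of M N] gtheta_le_quarter_pi[of M N] by simp_all
  have "1 - 2 * real M / real N = cos (2 * \<theta>)"
    unfolding cos_double_sin \<theta>_def using assms by (simp add: sin_gtheta)
  also have "\<dots> = sin (pi / 2 - 2 * \<theta>)" by (simp add: sin_cos_eq)
  also have "\<dots> \<le> sin (2 * real (gk N M) * \<theta>)"
    using grover_angle_bounds[OF \<theta>] \<theta> unfolding gk_def \<theta>_def[symmetric]
    by (intro sin_monotone_2pi_le) auto
  finally have "(1 - 2 * real M / real N)\<^sup>2 \<le> (sin (2 * real (gk N M) * \<theta>))\<^sup>2"
    using assms by (intro power_mono) (auto simp: field_simps)
  then have "(1 - 2 * real M / real N)\<^sup>2 / (4 * (sin \<theta>)\<^sup>2 * (cos \<theta>)\<^sup>2) \<le> ampRatio N M"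
    unfolding ampRatio_eq_sin[OF assms(1) M_lt_N] \<theta>_def by (intro divide_right_mono) auto
  then show ?thesis
    unfolding grover_bound_eq[OF assms(1) M_lt_N] \<theta>_def by (simp add: field_simps)
qed

lemma double_ampRatio:
  assumes "0 < M" and "2 * M \<le> N"
  shows "2 * ampRatio N M \<le> real N / (2 * real M) * (real N / (real N - real M))"
    and "real N / (2 * real M) * (real N / (real N - real M)) * (1 - 2 * real M / real N)\<^sup>2
           \<le> 2 * ampRatio N M"
    and "(real N)\<^sup>2 / (2 * (real M)\<^sup>2) * (tan (gtheta N M))\<^sup>2 * (sin (2 * real (gk N M) * gtheta N M))\<^sup>2
           = 2 * ampRatio N M"
proof -
  have M_lt_N: "M < N" using assms by simp
  have "real N / (2 * real M) = 2 * (real N / (4 * real M))"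
    and "(real N)\<^sup>2 / (2 * (real M)\<^sup>2) = 2 * ((real N)\<^sup>2 / (4 * (real M)\<^sup>2))"
    by simp_all
  then show "2 * ampRatio N M \<le> real N / (2 * real M) * (real N / (real N - real M))"
    and "real N / (2 * real M) * (real N / (real N - real M)) * (1 - 2 * real M / real N)\<^sup>2
           \<le> 2 * ampRatio N M"
    and "(real N)\<^sup>2 / (2 * (real M)\<^sup>2) * (tan (gtheta N M))\<^sup>2 * (sin (2 * real (gk N M) * gtheta N M))\<^sup>2
           = 2 * ampRatio N M"
    using ampRatio_le[OF assms(1) M_lt_N] ampRatio_ge[OF assms] ampRatio_eq_tan[OF assms(1) M_lt_N]
    by (simp_all only: mult.assoc)
qed

context
  fixes N s P M y :: nat
  assumes subset: "setA s P M \<subseteq> {..<N}" and N_pos: "N > 0" and y: "y mod N \<noteq> 0"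
begin

private abbreviation G where "G \<equiv> \<Sum>x\<in>setA s P M. omega N ^ (x * y)"

lemma PrAmp_eq: "PrAmp N s P M y = (ak N M - bk N M)\<^sup>2 * (cmod G)\<^sup>2 / real N"
proof -
  have "(\<Sum>z<N. complex_of_real (psik N s P M z) * omega N ^ (z * y))
      = (\<Sum>z<N. (if z \<in> setA s P M then of_real (ak N M) else of_real (bk N M)) * omega N ^ (z * y))"
    by (simp add: psik_def if_distrib)
  also have "\<dots> = of_real (ak N M - bk N M) * G"
    using sum_two_valued_weights[OF subset sum_omega_power_eq_0[OF N_pos y]] by simp
  finally show ?thesis
    unfolding PrAmp_def norm_mult norm_of_real using N_pos
    by (simp add: norm_mult power_mult_distrib power_divide del: of_real_diff)
qed

lemma PrQFT_eq: "PrQFT N s P M y = 4 * (cmod G)\<^sup>2 / (real N)\<^sup>2"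
proof -
  have "(\<Sum>z<N. (if z \<in> setA s P M then -1 else 1) * omega N ^ (z * y)) = -2 * G"
    using sum_two_valued_weights[OF subset sum_omega_power_eq_0[OF N_pos y]] by simp
  then show ?thesis
    unfolding PrQFT_def norm_mult norm_of_real
    using N_pos by (simp add: power_mult_distrib power_divide)
qed

lemma PrQHS_eq: "PrQHS N s P M y = 2 * (cmod G)\<^sup>2 / (real N)\<^sup>2"
proof -
  have "(\<Sum>x\<in>{..<N} - setA s P M. omega N ^ (x * y)) = (\<Sum>z<N. omega N ^ (z * y)) - G"
    using subset by (simp add: sum_diff)
  then have "(\<Sum>x\<in>{..<N} - setA s P M. omega N ^ (x * y)) = - G"
    using sum_omega_power_eq_0[OF N_pos y] by simp
  then show ?thesis unfolding PrQHS_def by simp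
qed

end

lemma Pr_proportional:
  assumes subset: "setA s P M \<subseteq> {..<N}" and "P \<ge> 1" and "M \<ge> 1"
    and "y < N" and good: "goodY N P M y"
  shows "PrQFT N s P M y > 0" and "PrQHS N s P M y > 0"
    and "PrAmp N s P M y = ampRatio N M * PrQFT N s P M y"
    and "PrAmp N s P M y = 2 * ampRatio N M * PrQHS N s P M y"
proof -
  have N_pos: "N > 0" using \<open>y < N\<close> by simp
  have "y \<noteq> 0" using good unfolding goodY_def by (cases "y = 0") auto
  then have y: "y mod N \<noteq> 0" using \<open>y < N\<close> by simp
  have "(\<Sum>x\<in>setA s P M. omega N ^ (x * y)) \<noteq> 0"
    using sum_setA_omega_power_nonzero assms N_pos by simp
  then have "(cmod (\<Sum>x\<in>setA s P M. omega N ^ (x * y)))\<^sup>2 > 0" by simp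
  then show "PrQFT N s P M y > 0" and "PrQHS N s P M y > 0"
    and "PrAmp N s P M y = ampRatio N M * PrQFT N s P M y"
    and "PrAmp N s P M y = 2 * ampRatio N M * PrQHS N s P M y"
    unfolding PrAmp_eq[OF subset N_pos y] PrQFT_eq[OF subset N_pos y] PrQHS_eq[OF subset N_pos y]
      ampRatio_def using N_pos by (simp_all add: field_simps power2_eq_square)
qed

lemma sum_divide_sum_eq_const:
  fixes f g :: "'a \<Rightarrow> real"
  assumes "finite S" and "S \<noteq> {}" and "\<And>x. x \<in> S \<Longrightarrow> g x > 0 \<and> f x = c * g x"
  shows "(\<Sum>x\<in>S. f x) / (\<Sum>x\<in>S. g x) = c"
proof -
  have "(\<Sum>x\<in>S. g x) > 0" using assms by (intro sum_pos) auto
  moreover have "(\<Sum>x\<in>S. f x) = c * (\<Sum>x\<in>S. g x)"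
    unfolding sum_distrib_left using assms(3) by simp
  ultimately show ?thesis by simp
qed

theorem mainTheorem4:
  fixes N s P M :: nat
  assumes "N \<ge> 2" and "P \<ge> 1" and "M \<ge> 1" and "M < N"
    and "s + (M - 1) * P \<le> N - 1"
    and "2 * M \<le> N"
  shows
   "(\<forall>y<N. goodY N P M y \<longrightarrow>
       real N / (4 * real M) * (real N / (real N - real M))
          \<ge> PrAmp N s P M y / PrQFT N s P M y \<and>
       PrAmp N s P M y / PrQFT N s P M y
          \<ge> real N / (4 * real M) * (real N / (real N - real M)) * (1 - 2 * real M / real N)\<^sup>2 \<and>
       real N / (2 * real M) * (real N / (real N - real M))
          \<ge> PrAmp N s P M y / PrQHS N s P M y \<and>
       PrAmp N s P M y / PrQHS N s P M y
          \<ge> real N / (2 * real M) * (real N / (real N - real M)) * (1 - 2 * real M / real N)\<^sup>2 \<and>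
       PrAmp N s P M y / PrQFT N s P M y
          = (real N)\<^sup>2 / (4 * (real M)\<^sup>2) * (tan (gtheta N M))\<^sup>2
              * (sin (2 * real (gk N M) * gtheta N M))\<^sup>2 \<and>
       PrAmp N s P M y / PrQHS N s P M y
          = (real N)\<^sup>2 / (2 * (real M)\<^sup>2) * (tan (gtheta N M))\<^sup>2
              * (sin (2 * real (gk N M) * gtheta N M))\<^sup>2)
    \<and>
    (\<forall>S. S \<noteq> {} \<and> S \<subseteq> {y. y < N \<and> goodY N P M y} \<longrightarrow>
       real N / (4 * real M) * (real N / (real N - real M))
          \<ge> (\<Sum>y\<in>S. PrAmp N s P M y) / (\<Sum>y\<in>S. PrQFT N s P M y) \<and>
       (\<Sum>y\<in>S. PrAmp N s P M y) / (\<Sum>y\<in>S. PrQFT N s P M y)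
          \<ge> real N / (4 * real M) * (real N / (real N - real M)) * (1 - 2 * real M / real N)\<^sup>2 \<and>
       real N / (2 * real M) * (real N / (real N - real M))
          \<ge> (\<Sum>y\<in>S. PrAmp N s P M y) / (\<Sum>y\<in>S. PrQHS N s P M y) \<and>
       (\<Sum>y\<in>S. PrAmp N s P M y) / (\<Sum>y\<in>S. PrQHS N s P M y)
          \<ge> real N / (2 * real M) * (real N / (real N - real M)) * (1 - 2 * real M / real N)\<^sup>2)"
proof -
  let ?R = "ampRatio N M"
  have M_bounds: "0 < M" "M < N" using assms by simp_all
  have proportional: "PrQFT N s P M y > 0 \<and> PrAmp N s P M y = ?R * PrQFT N s P M y"
    "PrQHS N s P M y > 0 \<and> PrAmp N s P M y = (2 * ?R) * PrQHS N s P M y"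
    if "y \<in> {y. y < N \<and> goodY N P M y}" for y
    using Pr_proportional[OF setA_subset_lessThan] that assms by auto
  have ratio_QFT: "(\<Sum>y\<in>S. PrAmp N s P M y) / (\<Sum>y\<in>S. PrQFT N s P M y) = ?R"
    and ratio_QHS: "(\<Sum>y\<in>S. PrAmp N s P M y) / (\<Sum>y\<in>S. PrQHS N s P M y) = 2 * ?R"
    if "S \<noteq> {}" "S \<subseteq> {y. y < N \<and> goodY N P M y}" for S
    using that proportional by (auto intro!: sum_divide_sum_eq_const finite_subset[of S "{..<N}"])
  have pointwise: "PrAmp N s P M y / PrQFT N s P M y = ?R" "PrAmp N s P M y / PrQHS N s P M y = 2 * ?R"
    if "y < N" "goodY N P M y" for y
    using ratio_QFT[of "{y}"] ratio_QHS[of "{y}"] that by simp_all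
  show ?thesis
    using ampRatio_le[OF M_bounds] ampRatio_ge[OF M_bounds(1) assms(6)] double_ampRatio[OF M_bounds(1) assms(6)]
      ampRatio_eq_tan[OF M_bounds, symmetric]
    by (intro conjI allI impI) (simp_all only: pointwise ratio_QFT ratio_QHS simp_thms)
qed

end
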